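(* Let $p$ be an odd prime, $r\ge3$ with $p\nmid r$, let $V_1=\mathbb{Z}_p^{d_1}$, $V_2=\mathbb{Z}_p^{d_2}$, and let $G=(V_1\times V_2)\rtimes_{(\psi_1,\psi_2)}\mathrm{D}_{2r}$, where $\psi_i:\mathrm{D}_{2r}\to\mathrm{GL}(V_i)$ is irreducible over $\mathbb{F}_p$ for $i=1,2$. If $G$ has a rotary pair $(\rho,\tau)$ with $|\rho|=2p$ and $|\tau|=2$, then $\psi_1\not\cong\psi_2$.
   Context: A rotary pair of $G$ is $(\rho,\tau)\in G\times G$ with $G=\langle\rho,\tau\rangle$ and $|\tau|=2$. $(V_1\times V_2)\rtimes_{(\psi_1,\psi_2)}\mathrm{D}_{2r}$ is the semidirect product in which $\mathrm{D}_{2r}$ acts on $V_i=\mathbb{F}_p^{d_i}$ via $\psi_i$ componentwise. *)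

theory Defs
  imports "HOL-Analysis.Analysis" "HOL-Algebra.Multiplicative_Group" "HOL-Algebra.Generated_Groups"
begin

text \<open>Dihedral group of order 2r: element (a, e) stands for rho^a sigma^e with
  a < r, sigma rho sigma = rho^-1.\<close>
definition dihedral :: "nat \<Rightarrow> (nat \<times> bool) monoid" where
  "dihedral r = \<lparr> carrier = {0..<r} \<times> UNIV,
     mult = (\<lambda>(a, e) (b, f). ((if e then a + (r - b) else a + b) mod r, e \<noteq> f)),
     one = (0, False) \<rparr>"

definition dihedral_rep :: "nat \<Rightarrow> (nat \<times> bool \<Rightarrow> 'k::field ^'n ^'n) \<Rightarrow> bool" where
  "dihedral_rep r \<psi> \<longleftrightarrow> \<psi> \<one>\<^bsub>dihedral r\<^esub> = mat 1 \<and>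
     (\<forall>g\<in>carrier (dihedral r). \<forall>h\<in>carrier (dihedral r).
        \<psi> (g \<otimes>\<^bsub>dihedral r\<^esub> h) = \<psi> g ** \<psi> h)"

definition k_subspace :: "('k::field ^'n) set \<Rightarrow> bool" where
  "k_subspace W \<longleftrightarrow> 0 \<in> W \<and> (\<forall>v\<in>W. \<forall>w\<in>W. v + w \<in> W) \<and> (\<forall>c. \<forall>v\<in>W. c *s v \<in> W)"

definition irreducible_rep :: "nat \<Rightarrow> (nat \<times> bool \<Rightarrow> 'k::field ^'n ^'n) \<Rightarrow> bool" where
  "irreducible_rep r \<psi> \<longleftrightarrow> dihedral_rep r \<psi> \<and> (\<exists>v::'k^'n. v \<noteq> 0) \<and>
     (\<forall>W. k_subspace W \<and> (\<forall>g\<in>carrier (dihedral r). \<forall>v\<in>W. \<psi> g *v v \<in> W)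
          \<longrightarrow> W = {0} \<or> W = UNIV)"

definition rep_iso :: "nat \<Rightarrow> (nat \<times> bool \<Rightarrow> 'k::field ^'n1 ^'n1) \<Rightarrow> (nat \<times> bool \<Rightarrow> 'k ^'n2 ^'n2) \<Rightarrow> bool" where
  "rep_iso r \<psi>1 \<psi>2 \<longleftrightarrow> (\<exists>(T::'k^'n1^'n2) (S::'k^'n2^'n1). T ** S = mat 1 \<and> S ** T = mat 1 \<and>
     (\<forall>g\<in>carrier (dihedral r). T ** \<psi>1 g = \<psi>2 g ** T))"

definition semidirect :: "nat \<Rightarrow> (nat \<times> bool \<Rightarrow> 'k::field ^'n1 ^'n1) \<Rightarrow> (nat \<times> bool \<Rightarrow> 'k ^'n2 ^'n2)
    \<Rightarrow> (('k^'n1) \<times> ('k^'n2) \<times> (nat \<times> bool)) monoid" where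
  "semidirect r \<psi>1 \<psi>2 = \<lparr> carrier = UNIV \<times> UNIV \<times> carrier (dihedral r),
     mult = (\<lambda>(v1, v2, g) (w1, w2, h). (v1 + \<psi>1 g *v w1, v2 + \<psi>2 g *v w2, g \<otimes>\<^bsub>dihedral r\<^esub> h)),
     one = (0, 0, \<one>\<^bsub>dihedral r\<^esub>) \<rparr>"

definition rotary_pair :: "('a, 'b) monoid_scheme \<Rightarrow> 'a \<Rightarrow> 'a \<Rightarrow> bool" where
  "rotary_pair G \<rho> \<tau> \<longleftrightarrow> \<rho> \<in> carrier G \<and> \<tau> \<in> carrier G \<and>
     generate G {\<rho>, \<tau>} = carrier G \<and> group.ord G \<tau> = 2"

end

(* Suppose psi1 and psi2 are isomorphic and write rho = (u, s), tau = (w, t) with u, w in V1 x V2 and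
   s, t in D_2r.  The images s, t generate D_2r and s^(2p) = 1 with p coprime to r, so s is a
   reflection: a rotation of order at most 2 is central and would generate, together with t, at most
   four elements.  Since rho^2 <> 1, the vector u + s u is nonzero.  In an irreducible representation
   of D_2r (char <> 2), two eigenvectors of a reflection for the same eigenvalue are related by an
   endomorphism; with the isomorphism V2 = V1 this yields a nonzero additive equivariant map
   P : V1 x V2 -> V1 killing u + s u.  Then s (P u) = - P u and t (P w) = - P w, and the same
   endomorphism argument gives one n in V1 with P u = n - s n and P w = n - t n.  So the crossed
   homomorphism (v, g) |-> P v - (n - g n) vanishes on the generators rho, tau, hence on all of G,
   and in particular P = 0 on V1 x V2, a contradiction. *)

theory Submission
  imports Defs "HOL-Number_Theory.Residues"
begin

section \<open>The dihedral group\<close>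

lemma dihedral_mult [simp]:
  "(a, e) \<otimes>\<^bsub>dihedral r\<^esub> (b, f) = ((if e then a + (r - b) else a + b) mod r, e \<noteq> f)"
  by (simp add: dihedral_def)

lemma one_dihedral [simp]: "\<one>\<^bsub>dihedral r\<^esub> = (0, False)"
  by (simp add: dihedral_def)

lemma carrier_dihedral: "carrier (dihedral r) = {0..<r} \<times> UNIV"
  by (simp add: dihedral_def)

lemma snd_dihedral_mult: "snd (x \<otimes>\<^bsub>dihedral r\<^esub> y) = (snd x \<noteq> snd y)"
  by (cases x, cases y) simp

lemma fst_dihedral_mult_le: "0 < r \<Longrightarrow> fst (x \<otimes>\<^bsub>dihedral r\<^esub> y) \<le> r"
  by (cases x, cases y) (simp add: less_imp_le)

lemma int_fst_dihedral_mult: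
  assumes "fst y \<le> r"
  shows "int (fst (x \<otimes>\<^bsub>dihedral r\<^esub> y)) =
    (if snd x then int (fst x) - int (fst y) else int (fst x) + int (fst y)) mod int r"
proof -
  have "(int a + int r - int b) mod int r = (int a - int b) mod int r" for a b
    by (metis add.commute add_diff_eq mod_add_self1)
  then show ?thesis
    using assms by (cases x, cases y) (simp add: zmod_int of_nat_diff)
qed

lemma group_dihedral:
  assumes "0 < r"
  shows "group (dihedral r)"
proof (rule groupI)
  fix x y z
  assume "x \<in> carrier (dihedral r)" "y \<in> carrier (dihedral r)" "z \<in> carrier (dihedral r)"
  then have "fst y \<le> r" "fst z \<le> r"
    by (auto simp: carrier_dihedral)
  then have "int (fst (x \<otimes>\<^bsub>dihedral r\<^esub> y \<otimes>\<^bsub>dihedral r\<^esub> z)) =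
      int (fst (x \<otimes>\<^bsub>dihedral r\<^esub> (y \<otimes>\<^bsub>dihedral r\<^esub> z)))"
    using assms
    by (simp add: int_fst_dihedral_mult fst_dihedral_mult_le snd_dihedral_mult del: dihedral_mult)
      (simp add: mod_simps algebra_simps)
  then show "x \<otimes>\<^bsub>dihedral r\<^esub> y \<otimes>\<^bsub>dihedral r\<^esub> z = x \<otimes>\<^bsub>dihedral r\<^esub> (y \<otimes>\<^bsub>dihedral r\<^esub> z)"
    by (simp add: prod_eq_iff snd_dihedral_mult del: dihedral_mult) blast
next
  fix x
  assume "x \<in> carrier (dihedral r)"
  then obtain a e where x: "x = (a, e)" and "a < r"
    by (auto simp: carrier_dihedral)
  show "\<exists>y\<in>carrier (dihedral r). y \<otimes>\<^bsub>dihedral r\<^esub> x = \<one>\<^bsub>dihedral r\<^esub>"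
  proof (cases e)
    case True
    then show ?thesis
      using \<open>a < r\<close> by (intro bexI[of _ x]) (simp_all add: x carrier_dihedral)
  next
    case False
    have "((r - a) mod r + a) mod r = 0"
      using \<open>a < r\<close> by (simp add: mod_add_left_eq)
    then show ?thesis
      using assms False by (intro bexI[of _ "((r - a) mod r, False)"]) (simp_all add: x carrier_dihedral)
  qed
qed (use assms in \<open>auto simp: carrier_dihedral\<close>)

lemma card_carrier_dihedral: "card (carrier (dihedral r)) = 2 * r"
  by (simp add: carrier_dihedral card_cartesian_product)

lemma dihedral_rotation_pow:
  "0 < r \<Longrightarrow> (c, False) [^]\<^bsub>dihedral r\<^esub> (n::nat) = ((n * c) mod r, False)"
  by (induction n) (simp_all add: mod_add_right_eq add.commute)

lemma dihedral_reflection_rotation: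
  "(c, True) \<otimes>\<^bsub>dihedral r\<^esub> (1, False) = (r - 1, False) \<otimes>\<^bsub>dihedral r\<^esub> (c, True)"
  by (simp add: add.commute)

lemma dihedral_rotation_commute:
  assumes "2 \<le> r" "g \<in> carrier (dihedral r)"
  shows "(1, False) \<otimes>\<^bsub>dihedral r\<^esub> g = g \<otimes>\<^bsub>dihedral r\<^esub> (if snd g then (r - 1, False) else (1, False))"
    and "(r - 1, False) \<otimes>\<^bsub>dihedral r\<^esub> g = g \<otimes>\<^bsub>dihedral r\<^esub> (if snd g then (1, False) else (r - 1, False))"
  using assms by (cases g, simp add: add.commute)+

lemma generate_dihedral_rotation_reflection:
  assumes "2 \<le> r" "c < r"
  shows "generate (dihedral r) {(1, False), (c, True)} = carrier (dihedral r)"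
proof
  interpret group "dihedral r"
    using assms by (simp add: group_dihedral)
  let ?H = "generate (dihedral r) {(1, False), (c, True)}"
  have "{(1, False), (c, True)} \<subseteq> carrier (dihedral r)"
    using assms by (auto simp: carrier_dihedral)
  then show "?H \<subseteq> carrier (dihedral r)"
    using generate_in_carrier by blast
  have rotation: "(k, False) \<in> ?H" if "k < r" for k
    using that
  proof (induction k)
    case 0
    show ?case
      using generate.one by (metis one_dihedral)
  next
    case (Suc k)
    then have "(1, False) \<otimes>\<^bsub>dihedral r\<^esub> (k, False) \<in> ?H"
      by (intro generate.eng[OF generate.incl]) auto
    then show ?case
      using Suc.prems by simp
  qed
  show "carrier (dihedral r) \<subseteq> ?H"
  proof
    fix x
    assume "x \<in> carrier (dihedral r)"
    then obtain k e where x: "x = (k, e)" and "k < r"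
      by (auto simp: carrier_dihedral)
    show "x \<in> ?H"
    proof (cases e)
      case True
      have "((k + r - c) mod r, False) \<otimes>\<^bsub>dihedral r\<^esub> (c, True) \<in> ?H"
        by (intro generate.eng rotation generate.incl) (use assms in \<open>auto simp: carrier_dihedral\<close>)
      moreover have "((k + r - c) mod r + c) mod r = k"
        using \<open>k < r\<close> assms by (simp add: mod_add_left_eq)
      ultimately show ?thesis
        using x True by simp
    next
      case False
      then show ?thesis
        using x rotation \<open>k < r\<close> by simp
    qed
  qed
qed

lemma (in group) subgroup_of_finite_submonoid:
  assumes "finite (carrier G)" and "submonoid H G"
  shows "subgroup H G"
proof (rule submonoid_subgroupI[OF assms(2)])
  interpret submonoid H G
    by (fact assms(2))
  fix a
  assume "a \<in> H"
  then have a: "a \<in> carrier G"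
    by simp
  have "a [^] (ord a - 1) \<otimes> a = a [^] ord a"
    using ord_ge_1[OF assms(1) a] by (simp flip: nat_pow_Suc)
  then have "inv a = a [^] (ord a - 1)"
    using a by (intro inv_equality) auto
  moreover have "a [^] (n::nat) \<in> H" for n
    by (induction n) (simp_all add: \<open>a \<in> H\<close>)
  ultimately show "inv a \<in> H"
    by simp
qed

lemma (in group) card_generate_commuting_involutions:
  assumes s: "s \<in> carrier G" "s \<otimes> s = \<one>" and t: "t \<in> carrier G" "t \<otimes> t = \<one>"
    and st: "s \<otimes> t = t \<otimes> s"
  shows "card (generate G {s, t}) \<le> 4"
proof -
  let ?K = "{\<one>, s, t, s \<otimes> t}"
  have inv: "inv s = s" "inv t = t"
    using s t by (simp_all add: inv_equality)
  have "subgroup ?K G"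
  proof (rule subgroupI)
    show "?K \<subseteq> carrier G"
      using s t by auto
    have "(s \<otimes> t) \<otimes> (s \<otimes> t) = \<one>"
      using s t by (metis m_assoc m_closed r_one st)
    then show "inv x \<in> ?K" if "x \<in> ?K" for x
      using that s t inv by (auto simp: inv_equality)
    have "s \<otimes> (s \<otimes> x) = x" "t \<otimes> (t \<otimes> x) = x" "t \<otimes> (s \<otimes> x) = s \<otimes> (t \<otimes> x)"
      if "x \<in> carrier G" for x
      using that s t st by (simp_all flip: m_assoc)
    then show "x \<otimes> y \<in> ?K" if "x \<in> ?K" "y \<in> ?K" for x y
      using that s t st[symmetric] by (auto simp: m_assoc)
  qed simp
  then have "generate G {s, t} \<subseteq> ?K"
    by (intro generate_subgroup_incl) auto
  moreover have "card ?K \<le> 4"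
    by (simp add: card_insert_if)
  ultimately show ?thesis
    by (meson card_mono finite.emptyI finite.insertI le_trans)
qed

lemma dihedral_rotation_central:
  assumes "r dvd 2 * c" "c < r" "g \<in> carrier (dihedral r)"
  shows "(c, False) \<otimes>\<^bsub>dihedral r\<^esub> g = g \<otimes>\<^bsub>dihedral r\<^esub> (c, False)"
proof -
  obtain q where "2 * c = r * q"
    using assms(1) by blast
  have "r * q < r * 2"
    using \<open>2 * c = r * q\<close> \<open>c < r\<close> by linarith
  then have "q = 0 \<or> q = 1"
    by auto
  with \<open>2 * c = r * q\<close> have "c = 0 \<or> r - c = c"
    by auto
  then show ?thesis
    using assms(3) by (cases g) (auto simp: add.commute)
qed

lemma dihedral_generator_is_reflection:
  assumes "3 \<le> r" and "coprime r k"
    and s: "s \<in> carrier (dihedral r)" "s [^]\<^bsub>dihedral r\<^esub> (2 * k) = \<one>\<^bsub>dihedral r\<^esub>"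
    and t: "t \<in> carrier (dihedral r)" "t \<otimes>\<^bsub>dihedral r\<^esub> t = \<one>\<^bsub>dihedral r\<^esub>"
    and gen: "generate (dihedral r) {s, t} = carrier (dihedral r)"
  shows "snd s"
proof (rule ccontr)
  assume "\<not> snd s"
  then obtain c where sc: "s = (c, False)" and "c < r"
    using s(1) by (cases s) (auto simp: carrier_dihedral)
  interpret group "dihedral r"
    using assms(1) by (simp add: group_dihedral)
  have "r dvd k * (2 * c)"
    using s(2) assms(1) by (simp add: sc dihedral_rotation_pow dvd_eq_mod_eq_0 ac_simps)
  then have "r dvd 2 * c"
    using \<open>coprime r k\<close> by (simp add: coprime_dvd_mult_right_iff)
  then have "card (generate (dihedral r) {s, t}) \<le> 4"
    using s(1) t \<open>c < r\<close>
    by (intro card_generate_commuting_involutions)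
      (auto simp: sc dihedral_rotation_central mult_2 dvd_imp_mod_0)
  then show False
    using assms(1) by (simp add: gen card_carrier_dihedral)
qed

section \<open>Invariant subspaces and endomorphisms of representations\<close>

lemma dihedral_rep_mult_vec:
  assumes "dihedral_rep r \<psi>" "g \<in> carrier (dihedral r)" "h \<in> carrier (dihedral r)"
  shows "\<psi> g *v (\<psi> h *v v) = \<psi> (g \<otimes>\<^bsub>dihedral r\<^esub> h) *v v"
proof -
  have "\<psi> (g \<otimes>\<^bsub>dihedral r\<^esub> h) = \<psi> g ** \<psi> h"
    using assms unfolding dihedral_rep_def by blast
  then show ?thesis
    by (simp add: matrix_vector_mul_assoc)
qed

lemma dihedral_rep_one_vec: "dihedral_rep r \<psi> \<Longrightarrow> \<psi> (0, False) *v v = v"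
  by (simp add: dihedral_rep_def)

lemma dihedral_rep_involution_vec:
  assumes "dihedral_rep r \<psi>" "g \<in> carrier (dihedral r)" "g \<otimes>\<^bsub>dihedral r\<^esub> g = \<one>\<^bsub>dihedral r\<^esub>"
  shows "\<psi> g *v (\<psi> g *v v) = v"
  using assms by (simp add: dihedral_rep_mult_vec dihedral_rep_one_vec)

definition rep_invariant :: "nat \<Rightarrow> (nat \<times> bool \<Rightarrow> 'k::field ^'n ^'n) \<Rightarrow> ('k^'n) set \<Rightarrow> bool" where
  "rep_invariant r \<psi> W \<longleftrightarrow> (\<forall>g\<in>carrier (dihedral r). \<forall>v\<in>W. \<psi> g *v v \<in> W)"

lemma irreducible_rep_invariant_eq_UNIV:
  assumes "irreducible_rep r \<psi>" "k_subspace W" "rep_invariant r \<psi> W" "a \<in> W" "a \<noteq> 0"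
  shows "W = UNIV"
  using assms unfolding irreducible_rep_def rep_invariant_def by blast

lemma rep_invariant_if_generators:
  assumes rep: "dihedral_rep r \<psi>" and "0 < r" and A: "A \<subseteq> carrier (dihedral r)"
    and gen: "generate (dihedral r) A = carrier (dihedral r)"
    and inv: "\<And>a v. a \<in> A \<Longrightarrow> v \<in> W \<Longrightarrow> \<psi> a *v v \<in> W"
  shows "rep_invariant r \<psi> W"
proof -
  interpret group "dihedral r"
    using \<open>0 < r\<close> by (simp add: group_dihedral)
  let ?H = "{g \<in> carrier (dihedral r). \<forall>v\<in>W. \<psi> g *v v \<in> W}"
  have "submonoid ?H (dihedral r)"
  proof
    show "\<one>\<^bsub>dihedral r\<^esub> \<in> ?H"
      using rep \<open>0 < r\<close> by (simp add: dihedral_rep_one_vec carrier_dihedral)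
    fix g h
    assume "g \<in> ?H" "h \<in> ?H"
    then show "g \<otimes>\<^bsub>dihedral r\<^esub> h \<in> ?H"
      using rep by (simp add: dihedral_rep_mult_vec[symmetric])
  qed blast
  then have "subgroup ?H (dihedral r)"
    by (intro subgroup_of_finite_submonoid) (auto simp: carrier_dihedral)
  then have "generate (dihedral r) A \<subseteq> ?H"
    using A inv by (intro generate_subgroup_incl) auto
  then show ?thesis
    unfolding rep_invariant_def gen by blast
qed

lemma k_subspace_fixed: "k_subspace {v. A *v v = v}"
  by (simp add: k_subspace_def matrix_vector_right_distrib vector_scalar_commute)

lemma k_subspace_Int: "k_subspace V \<Longrightarrow> k_subspace W \<Longrightarrow> k_subspace (V \<inter> W)"
  by (simp add: k_subspace_def)

definition intertwiner :: "nat \<Rightarrow> (nat \<times> bool \<Rightarrow> 'k::field ^'n ^'n) \<Rightarrow> ('k^'n \<Rightarrow> 'k^'n) \<Rightarrow> bool" where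
  "intertwiner r \<psi> f \<longleftrightarrow> (\<forall>v w. f (v + w) = f v + f w) \<and> (\<forall>c v. f (c *s v) = c *s f v) \<and>
     (\<forall>g\<in>carrier (dihedral r). \<forall>v. f (\<psi> g *v v) = \<psi> g *v f v)"

lemma intertwiner_add: "intertwiner r \<psi> f \<Longrightarrow> f (v + w) = f v + f w"
  by (simp add: intertwiner_def)

lemma intertwiner_smult: "intertwiner r \<psi> f \<Longrightarrow> f (c *s v) = c *s f v"
  by (simp add: intertwiner_def)

lemma intertwiner_commute:
  "intertwiner r \<psi> f \<Longrightarrow> g \<in> carrier (dihedral r) \<Longrightarrow> f (\<psi> g *v v) = \<psi> g *v f v"
  by (simp add: intertwiner_def)

lemma intertwiner_diff: "intertwiner r \<psi> f \<Longrightarrow> f (v - w) = f v - f w"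
  using intertwiner_add[of r \<psi> f w "v - w"] by simp

lemma intertwiner_id: "intertwiner r \<psi> (\<lambda>v. v)"
  by (simp add: intertwiner_def)

lemma intertwiner_zero: "intertwiner r \<psi> (\<lambda>v. 0)"
  by (simp add: intertwiner_def)

lemma intertwiner_plus:
  "intertwiner r \<psi> f \<Longrightarrow> intertwiner r \<psi> g \<Longrightarrow> intertwiner r \<psi> (\<lambda>v. f v + g v)"
  by (simp add: intertwiner_def matrix_vector_right_distrib vector_add_ldistrib algebra_simps)

lemma intertwiner_comp:
  "intertwiner r \<psi> f \<Longrightarrow> intertwiner r \<psi> g \<Longrightarrow> intertwiner r \<psi> (\<lambda>v. f (g v))"
  by (simp add: intertwiner_def)

lemma intertwiner_scale: "intertwiner r \<psi> f \<Longrightarrow> intertwiner r \<psi> (\<lambda>v. c *s f v)"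
  by (simp add: intertwiner_def vector_add_ldistrib vector_smult_assoc vector_scalar_commute mult.commute)

lemma intertwiner_uminus: "intertwiner r \<psi> f \<Longrightarrow> intertwiner r \<psi> (\<lambda>v. - f v)"
  using intertwiner_scale[of r \<psi> f "-1"] by (simp flip: vector_sneg_minus1)

lemma intertwiner_rotation_sum:
  assumes rep: "dihedral_rep r \<psi>" and "2 \<le> r"
  shows "intertwiner r \<psi> (\<lambda>v. \<psi> (1, False) *v v + \<psi> (r - 1, False) *v v)"
  unfolding intertwiner_def
proof (intro conjI allI ballI)
  fix g v
  assume g: "g \<in> carrier (dihedral r)"
  have "(1, False) \<in> carrier (dihedral r)" "(r - 1, False) \<in> carrier (dihedral r)"
    using \<open>2 \<le> r\<close> by (auto simp: carrier_dihedral)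
  then show "\<psi> (1, False) *v (\<psi> g *v v) + \<psi> (r - 1, False) *v (\<psi> g *v v) =
      \<psi> g *v (\<psi> (1, False) *v v + \<psi> (r - 1, False) *v v)"
    using g dihedral_rotation_commute[OF \<open>2 \<le> r\<close> g]
    by (cases "snd g") (simp_all add: dihedral_rep_mult_vec[OF rep] matrix_vector_right_distrib add.commute)
qed (simp_all add: matrix_vector_right_distrib vector_scalar_commute vector_add_ldistrib algebra_simps)

lemma reflection_intertwiner_sum:
  assumes rep: "dihedral_rep r \<psi>" and "2 \<le> r" "c < r"
    and Q: "intertwiner r \<psi> Q" "intertwiner r \<psi> Q'" and a: "\<psi> (c, True) *v a = \<epsilon> *s a"
  shows "\<psi> (c, True) *v (Q a + Q' (\<psi> (1, False) *v a)) = \<epsilon> *s (Q a + Q' (\<psi> (r - 1, False) *v a))"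
proof -
  have carrier: "(c, True) \<in> carrier (dihedral r)" "(1, False) \<in> carrier (dihedral r)"
    "(r - 1, False) \<in> carrier (dihedral r)"
    using assms by (auto simp: carrier_dihedral)
  have "\<psi> (c, True) *v (\<psi> (1, False) *v a) = \<psi> (r - 1, False) *v (\<psi> (c, True) *v a)"
    using dihedral_reflection_rotation[of r c]
    by (simp only: dihedral_rep_mult_vec[OF rep carrier(1,2)] dihedral_rep_mult_vec[OF rep carrier(3,1)])
  moreover have "\<psi> (c, True) *v F v = F (\<psi> (c, True) *v v)" if "intertwiner r \<psi> F" for F v
    using intertwiner_commute[OF that carrier(1)] by simp
  ultimately show ?thesis
    using a Q by (simp add: matrix_vector_right_distrib vector_scalar_commute intertwiner_smult
        vector_add_ldistrib)
qed

definition intertwiner_span :: "nat \<Rightarrow> (nat \<times> bool \<Rightarrow> 'k::field ^'n ^'n) \<Rightarrow> 'k^'n \<Rightarrow> 'k^'n \<Rightarrow> ('k^'n) set" where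
  "intertwiner_span r \<psi> x y = {Q x + Q' y | Q Q'. intertwiner r \<psi> Q \<and> intertwiner r \<psi> Q'}"

lemma intertwiner_spanI:
  "intertwiner r \<psi> Q \<Longrightarrow> intertwiner r \<psi> Q' \<Longrightarrow> v = Q x + Q' y \<Longrightarrow> v \<in> intertwiner_span r \<psi> x y"
  unfolding intertwiner_span_def by blast

lemma k_subspace_intertwiner_span: "k_subspace (intertwiner_span r \<psi> x y)"
  unfolding k_subspace_def
proof (intro conjI ballI allI)
  show "0 \<in> intertwiner_span r \<psi> x y"
    by (rule intertwiner_spanI[OF intertwiner_zero intertwiner_zero]) simp
next
  fix v w
  assume "v \<in> intertwiner_span r \<psi> x y" "w \<in> intertwiner_span r \<psi> x y"
  then obtain Q1 Q1' Q2 Q2' where Q: "intertwiner r \<psi> Q1" "intertwiner r \<psi> Q1'"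
    "intertwiner r \<psi> Q2" "intertwiner r \<psi> Q2'" and "v = Q1 x + Q1' y" "w = Q2 x + Q2' y"
    unfolding intertwiner_span_def by blast
  then show "v + w \<in> intertwiner_span r \<psi> x y"
    by (intro intertwiner_spanI[OF intertwiner_plus[OF Q(1,3)] intertwiner_plus[OF Q(2,4)]])
      (simp add: algebra_simps)
next
  fix d v
  assume "v \<in> intertwiner_span r \<psi> x y"
  then obtain Q Q' where Q: "intertwiner r \<psi> Q" "intertwiner r \<psi> Q'" and "v = Q x + Q' y"
    unfolding intertwiner_span_def by blast
  then show "d *s v \<in> intertwiner_span r \<psi> x y"
    by (intro intertwiner_spanI[OF intertwiner_scale[OF Q(1)] intertwiner_scale[OF Q(2)]])
      (simp add: vector_add_ldistrib)
qed

text \<open>Endomorphisms applied to an eigenvector \<open>a\<close> of a reflection and to \<open>\<rho> a\<close> already give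
  an invariant subspace, because \<open>\<rho>\<^sup>2 = (\<rho> + \<rho>\<inverse>) \<rho> - 1\<close> with \<open>\<rho> + \<rho>\<inverse>\<close> central.\<close>
lemma intertwiner_span_eq_UNIV:
  assumes irr: "irreducible_rep r \<psi>" and "2 \<le> r" "c < r"
    and a: "\<psi> (c, True) *v a = \<epsilon> *s a" "a \<noteq> 0"
  shows "intertwiner_span r \<psi> a (\<psi> (1, False) *v a) = UNIV"
proof -
  have rep: "dihedral_rep r \<psi>"
    using irr by (simp add: irreducible_rep_def)
  define X where "X = \<psi> (1, False)"
  define Y where "Y = \<psi> (r - 1, False)"
  define C where "C = (\<lambda>v. X *v v + Y *v v)"
  let ?W = "intertwiner_span r \<psi> a (X *v a)"
  have C: "intertwiner r \<psi> C"
    unfolding C_def X_def Y_def using rep \<open>2 \<le> r\<close> by (rule intertwiner_rotation_sum)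
  have carrier: "(1, False) \<in> carrier (dihedral r)" "(r - 1, False) \<in> carrier (dihedral r)"
    using \<open>2 \<le> r\<close> by (auto simp: carrier_dihedral)
  have "Y *v (X *v v) = v" for v
    using dihedral_rep_mult_vec[OF rep carrier(2,1)] dihedral_rep_one_vec[OF rep] \<open>2 \<le> r\<close>
    by (simp add: X_def Y_def)
  then have XX: "X *v (X *v v) = C (X *v v) - v" for v
    by (simp add: C_def)
  have invariant_X: "X *v v \<in> ?W" if "v \<in> ?W" for v
  proof -
    obtain Q Q' where Q: "intertwiner r \<psi> Q" "intertwiner r \<psi> Q'" and v: "v = Q a + Q' (X *v a)"
      using \<open>v \<in> ?W\<close> unfolding intertwiner_span_def by blast
    have "X *v v = Q (X *v a) + Q' (X *v (X *v a))"
      using Q carrier(1) by (simp add: v X_def intertwiner_commute matrix_vector_right_distrib)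
    also have "\<dots> = - Q' a + (Q (X *v a) + Q' (C (X *v a)))"
      using Q(2) by (simp add: XX intertwiner_diff)
    finally show ?thesis
      by (intro intertwiner_spanI[OF intertwiner_uminus[OF Q(2)]
            intertwiner_plus[OF Q(1) intertwiner_comp[OF Q(2) C]]])
  qed
  have invariant_S: "\<psi> (c, True) *v v \<in> ?W" if "v \<in> ?W" for v
  proof -
    obtain Q Q' where Q: "intertwiner r \<psi> Q" "intertwiner r \<psi> Q'" and v: "v = Q a + Q' (X *v a)"
      using \<open>v \<in> ?W\<close> unfolding intertwiner_span_def by blast
    have "\<psi> (c, True) *v v = \<epsilon> *s (Q a + Q' (C a - X *v a))"
      using reflection_intertwiner_sum[OF rep \<open>2 \<le> r\<close> \<open>c < r\<close> Q a(1)]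
      by (simp add: v X_def Y_def C_def)
    also have "\<dots> = (\<epsilon> *s Q a + \<epsilon> *s Q' (C a)) + - (\<epsilon> *s Q' (X *v a))"
      using Q(2) by (simp add: intertwiner_diff vector_add_ldistrib vector_ssub_ldistrib)
    finally show ?thesis
      by (intro intertwiner_spanI[OF intertwiner_plus[OF intertwiner_scale[OF Q(1)]
            intertwiner_scale[OF intertwiner_comp[OF Q(2) C]]] intertwiner_uminus[OF intertwiner_scale[OF Q(2)]]])
  qed
  have "rep_invariant r \<psi> ?W"
    using rep \<open>2 \<le> r\<close> \<open>c < r\<close> generate_dihedral_rotation_reflection[OF \<open>2 \<le> r\<close> \<open>c < r\<close>]
      invariant_X invariant_S
    by (intro rep_invariant_if_generators[where A = "{(1, False), (c, True)}"]) (auto simp: X_def carrier_dihedral)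
  moreover have "a \<in> ?W"
    by (rule intertwiner_spanI[OF intertwiner_id intertwiner_zero]) simp
  ultimately show ?thesis
    using irreducible_rep_invariant_eq_UNIV[OF irr k_subspace_intertwiner_span] a(2)
    unfolding X_def by blast
qed

lemma half_smult_add_self: "(2::'k::field) \<noteq> 0 \<Longrightarrow> (1 / 2) *s v + (1 / 2) *s v = (v::'k^'n)"
proof -
  assume "(2::'k) \<noteq> 0"
  then have "(1 / 2) * x + (1 / 2) * x = x" for x :: 'k
    by (simp flip: mult_2)
  then show ?thesis
    by (simp add: vec_eq_iff)
qed

lemma reflection_eigenvectors_intertwined:
  fixes \<psi> :: "nat \<times> bool \<Rightarrow> 'k::field ^'n ^'n"
  assumes irr: "irreducible_rep r \<psi>" and "2 \<le> r" "c < r" and two: "(2::'k) \<noteq> 0"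
    and a: "\<psi> (c, True) *v a = \<epsilon> *s a" "a \<noteq> 0" and b: "\<psi> (c, True) *v b = \<epsilon> *s b"
  obtains R where "intertwiner r \<psi> R" "R a = b"
proof -
  have rep: "dihedral_rep r \<psi>"
    using irr by (simp add: irreducible_rep_def)
  define X where "X = \<psi> (1, False)"
  define Y where "Y = \<psi> (r - 1, False)"
  obtain Q Q' where Q: "intertwiner r \<psi> Q" "intertwiner r \<psi> Q'" and bX: "b = Q a + Q' (X *v a)"
    using intertwiner_span_eq_UNIV[OF irr \<open>2 \<le> r\<close> \<open>c < r\<close> a] unfolding intertwiner_span_def X_def by blast
  have refl: "(c, True) \<in> carrier (dihedral r)" "(c, True) \<otimes>\<^bsub>dihedral r\<^esub> (c, True) = \<one>\<^bsub>dihedral r\<^esub>"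
    using \<open>c < r\<close> by (auto simp: carrier_dihedral)
  have "(\<epsilon> * \<epsilon>) *s a = a"
    using dihedral_rep_involution_vec[OF rep refl, of a] a(1) by (simp add: vector_scalar_commute vector_smult_assoc)
  then have "\<epsilon> * \<epsilon> = 1"
    using a(2) vector_mul_rcancel[of "\<epsilon> * \<epsilon>" a 1] by simp
  then have "b = \<epsilon> *s (\<psi> (c, True) *v b)"
    using b by (simp add: vector_smult_assoc)
  also have "\<dots> = Q a + Q' (Y *v a)"
    using reflection_intertwiner_sum[OF rep \<open>2 \<le> r\<close> \<open>c < r\<close> Q a(1)] \<open>\<epsilon> * \<epsilon> = 1\<close>
    by (simp add: bX X_def Y_def vector_smult_assoc)
  finally have bY: "b = Q a + Q' (Y *v a)" .
  define R where "R = (\<lambda>v. Q v + (1 / 2) *s Q' (X *v v + Y *v v))"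
  have "intertwiner r \<psi> R"
    unfolding R_def X_def Y_def
    by (intro intertwiner_plus[OF Q(1)] intertwiner_scale intertwiner_comp[OF Q(2)]
        intertwiner_rotation_sum rep \<open>2 \<le> r\<close>)
  moreover have "R a = b"
  proof -
    have "Q' (X *v a) = b - Q a" "Q' (Y *v a) = b - Q a"
      using bX bY by simp_all
    then have "R a = Q a + ((1 / 2) *s (b - Q a) + (1 / 2) *s (b - Q a))"
      unfolding R_def by (simp only: intertwiner_add[OF Q(2)] vector_add_ldistrib)
    also have "\<dots> = b"
      by (simp only: half_smult_add_self[OF two]) simp
    finally show ?thesis .
  qed
  ultimately show ?thesis
    using that by blast
qed

section \<open>Coboundaries with respect to a reflection and an involution\<close>

lemma vec_eq_neg_self_iff: "(2::'k::field) \<noteq> 0 \<Longrightarrow> (v = - v) \<longleftrightarrow> (v::'k^'n) = 0"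
proof -
  assume "(2::'k) \<noteq> 0"
  then have "x = - x \<longleftrightarrow> x = 0" for x :: 'k
    by (simp add: eq_neg_iff_add_eq_0 flip: mult_2)
  then show ?thesis
    by (simp add: vec_eq_iff)
qed

lemma matrix_vector_mult_uminus_right: "(A::'k::field^'n^'m) *v (- v) = - (A *v v)"
  using matrix_vector_mult_diff_distrib[of A 0 v] by simp

lemma involution_without_fixed_vectors:
  assumes "\<And>v. T *v (T *v v) = v" and "\<And>z. T *v z = z \<Longrightarrow> z = 0"
  shows "T *v v = - (v::'k::field^'n)"
proof -
  have "T *v (v + T *v v) = v + T *v v"
    using assms(1) by (simp add: matrix_vector_right_distrib add.commute)
  then have "v + T *v v = 0"
    by (rule assms(2))
  then show ?thesis
    by (simp add: eq_neg_iff_add_eq_0 add.commute)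
qed


text \<open>Either \<open>t\<close> has a nonzero fixed vector, and the common fixed space of \<open>s\<close> and \<open>t\<close> is a
  nonzero invariant subspace, or \<open>t\<close> acts as \<open>-1\<close>, and the fixed space of \<open>s\<close> is invariant.\<close>
lemma reflection_acts_trivially:
  assumes irr: "irreducible_rep r \<psi>" and "0 < r"
    and s: "s \<in> carrier (dihedral r)" "s \<otimes>\<^bsub>dihedral r\<^esub> s = \<one>\<^bsub>dihedral r\<^esub>"
    and t: "t \<in> carrier (dihedral r)" "t \<otimes>\<^bsub>dihedral r\<^esub> t = \<one>\<^bsub>dihedral r\<^esub>"
    and gen: "generate (dihedral r) {s, t} = carrier (dihedral r)"
    and a: "\<psi> s *v a = a" "a \<noteq> 0"
    and fixed: "\<And>z. \<psi> t *v z = z \<Longrightarrow> \<psi> s *v z = z"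
  shows "\<psi> s *v v = v"
proof -
  have rep: "dihedral_rep r \<psi>"
    using irr by (simp add: irreducible_rep_def)
  have invariant: "rep_invariant r \<psi> U"
    if "\<And>v. v \<in> U \<Longrightarrow> \<psi> s *v v \<in> U" "\<And>v. v \<in> U \<Longrightarrow> \<psi> t *v v \<in> U" for U
  proof (rule rep_invariant_if_generators[OF rep \<open>0 < r\<close> _ gen])
    show "{s, t} \<subseteq> carrier (dihedral r)"
      using s(1) t(1) by simp
  qed (use that in blast)
  show ?thesis
  proof (cases "\<exists>z. z \<noteq> 0 \<and> \<psi> t *v z = z")
    case True
    then obtain z where z: "z \<noteq> 0" "\<psi> t *v z = z"
      by blast
    let ?U = "{v. \<psi> s *v v = v} \<inter> {v. \<psi> t *v v = v}"
    have "rep_invariant r \<psi> ?U"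
      by (rule invariant) auto
    moreover have "z \<in> ?U"
      using z fixed by blast
    ultimately have "?U = UNIV"
      using irreducible_rep_invariant_eq_UNIV[OF irr k_subspace_Int[OF k_subspace_fixed k_subspace_fixed]] z(1)
      by blast
    then show ?thesis
      by blast
  next
    case False
    then have t_neg: "\<psi> t *v v = - v" for v
      by (intro involution_without_fixed_vectors dihedral_rep_involution_vec[OF rep t]) blast
    have "rep_invariant r \<psi> {v. \<psi> s *v v = v}"
      by (rule invariant) (auto simp: t_neg matrix_vector_mult_uminus_right)
    then have "{v. \<psi> s *v v = v} = UNIV"
      using irreducible_rep_invariant_eq_UNIV[OF irr k_subspace_fixed] a by blast
    then show ?thesis
      by blast
  qed
qed

text \<open>If \<open>t\<close> fixes some \<open>z\<close> moved by \<open>s\<close>, an endomorphism mapping the \<open>(-1)\<close>-eigenvector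
  \<open>z - s z\<close> to \<open>m\<close> sends \<open>z\<close> to the required \<open>n\<close>; otherwise \<open>s\<close> acts trivially and \<open>m = 0\<close>.\<close>
lemma reflection_coboundary:
  fixes \<psi> :: "nat \<times> bool \<Rightarrow> 'k::field ^'n ^'n"
  assumes irr: "irreducible_rep r \<psi>" and "2 \<le> r" "c < r" and two: "(2::'k) \<noteq> 0"
    and t: "t \<in> carrier (dihedral r)" "t \<otimes>\<^bsub>dihedral r\<^esub> t = \<one>\<^bsub>dihedral r\<^esub>"
    and gen: "generate (dihedral r) {(c, True), t} = carrier (dihedral r)"
    and a: "\<psi> (c, True) *v a = a" "a \<noteq> 0"
    and m: "\<psi> (c, True) *v m = - m"
  obtains n where "\<psi> t *v n = n" "n - \<psi> (c, True) *v n = m"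
proof -
  have rep: "dihedral_rep r \<psi>"
    using irr by (simp add: irreducible_rep_def)
  have s: "(c, True) \<in> carrier (dihedral r)" "(c, True) \<otimes>\<^bsub>dihedral r\<^esub> (c, True) = \<one>\<^bsub>dihedral r\<^esub>"
    using \<open>c < r\<close> by (auto simp: carrier_dihedral)
  show ?thesis
  proof (cases "\<exists>z. \<psi> t *v z = z \<and> \<psi> (c, True) *v z \<noteq> z")
    case True
    then obtain z where z: "\<psi> t *v z = z" "\<psi> (c, True) *v z \<noteq> z"
      by blast
    define n0 where "n0 = z - \<psi> (c, True) *v z"
    have "\<psi> (c, True) *v n0 = (- 1) *s n0"
      using dihedral_rep_involution_vec[OF rep s]
      by (simp add: n0_def matrix_vector_mult_diff_distrib flip: vector_sneg_minus1)
    moreover have "\<psi> (c, True) *v m = (- 1) *s m"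
      using m by (simp flip: vector_sneg_minus1)
    moreover have "n0 \<noteq> 0"
      using z(2) by (simp add: n0_def)
    ultimately obtain R where R: "intertwiner r \<psi> R" "R n0 = m"
      using reflection_eigenvectors_intertwined[OF irr \<open>2 \<le> r\<close> \<open>c < r\<close> two] by blast
    show ?thesis
    proof
      show "\<psi> t *v R z = R z"
        using intertwiner_commute[OF R(1) t(1), of z] z(1) by simp
      show "R z - \<psi> (c, True) *v R z = m"
        using intertwiner_commute[OF R(1) s(1)] R by (simp add: n0_def intertwiner_diff)
    qed
  next
    case False
    have "\<psi> (c, True) *v v = v" for v
      by (rule reflection_acts_trivially[OF irr _ s t gen a]) (use \<open>2 \<le> r\<close> False in auto)
    then have "m = - m"
      using m by simp
    then have "m = 0"
      using vec_eq_neg_self_iff[OF two] by blast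
    then show ?thesis
      using that[of 0] by simp
  qed
qed

lemma reflection_involution_coboundary:
  fixes \<psi> :: "nat \<times> bool \<Rightarrow> 'k::field ^'n ^'n"
  assumes irr: "irreducible_rep r \<psi>" and "2 \<le> r" "c < r" and two: "(2::'k) \<noteq> 0"
    and t: "t \<in> carrier (dihedral r)" "t \<otimes>\<^bsub>dihedral r\<^esub> t = \<one>\<^bsub>dihedral r\<^esub>"
    and gen: "generate (dihedral r) {(c, True), t} = carrier (dihedral r)"
    and a: "\<psi> (c, True) *v a = a" "a \<noteq> 0"
    and m: "\<psi> (c, True) *v m = - m" and f: "\<psi> t *v f = - f"
  obtains n where "m = n - \<psi> (c, True) *v n" "f = n - \<psi> t *v n"
proof -
  have rep: "dihedral_rep r \<psi>"
    using irr by (simp add: irreducible_rep_def)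
  have s: "(c, True) \<in> carrier (dihedral r)" "(c, True) \<otimes>\<^bsub>dihedral r\<^esub> (c, True) = \<one>\<^bsub>dihedral r\<^esub>"
    using \<open>c < r\<close> by (auto simp: carrier_dihedral)
  define S where "S = \<psi> (c, True)"
  define m' where "m' = m - (1 / 2) *s (f - S *v f)"
  have "S *v m' = - m'"
    using m dihedral_rep_involution_vec[OF rep s]
    by (simp add: m'_def S_def matrix_vector_mult_diff_distrib vector_scalar_commute vector_ssub_ldistrib)
  then obtain n' where n': "\<psi> t *v n' = n'" "n' - S *v n' = m'"
    using reflection_coboundary[OF irr \<open>2 \<le> r\<close> \<open>c < r\<close> two t gen a] unfolding S_def by blast
  define n where "n = (1 / 2) *s f + n'"
  show ?thesis
  proof
    have "n - S *v n = (1 / 2) *s (f - S *v f) + (n' - S *v n')"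
      by (simp add: n_def matrix_vector_right_distrib vector_scalar_commute vector_ssub_ldistrib)
    also have "\<dots> = m"
      by (simp add: n'(2) m'_def)
    finally show "m = n - \<psi> (c, True) *v n"
      by (simp add: S_def)
    have "n - \<psi> t *v n = (1 / 2) *s f + (1 / 2) *s f"
      using n'(1) f
      by (simp add: n_def matrix_vector_right_distrib vector_scalar_commute vector_add_ldistrib vector_smult_rneg)
    then show "f = n - \<psi> t *v n"
      by (simp only: half_smult_add_self[OF two])
  qed
qed

section \<open>The semidirect product\<close>

lemma semidirect_mult [simp]:
  "(v1, v2, g) \<otimes>\<^bsub>semidirect r \<psi>1 \<psi>2\<^esub> (w1, w2, h) =
    (v1 + \<psi>1 g *v w1, v2 + \<psi>2 g *v w2, g \<otimes>\<^bsub>dihedral r\<^esub> h)"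
  by (simp add: semidirect_def)

lemma one_semidirect [simp]: "\<one>\<^bsub>semidirect r \<psi>1 \<psi>2\<^esub> = (0, 0, \<one>\<^bsub>dihedral r\<^esub>)"
  by (simp add: semidirect_def)

lemma carrier_semidirect [simp]:
  "carrier (semidirect r \<psi>1 \<psi>2) = UNIV \<times> UNIV \<times> carrier (dihedral r)"
  by (simp add: semidirect_def)

lemma group_semidirect:
  assumes rep1: "dihedral_rep r \<psi>1" and rep2: "dihedral_rep r \<psi>2" and "0 < r"
  shows "group (semidirect r \<psi>1 \<psi>2)"
proof -
  interpret D: group "dihedral r"
    using \<open>0 < r\<close> by (rule group_dihedral)
  show ?thesis
  proof (rule groupI)
    fix x y z
    assume "x \<in> carrier (semidirect r \<psi>1 \<psi>2)" "y \<in> carrier (semidirect r \<psi>1 \<psi>2)"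
      "z \<in> carrier (semidirect r \<psi>1 \<psi>2)"
    then obtain u1 u2 g v1 v2 h w1 w2 k where xyz: "x = (u1, u2, g)" "y = (v1, v2, h)" "z = (w1, w2, k)"
      and ghk: "g \<in> carrier (dihedral r)" "h \<in> carrier (dihedral r)" "k \<in> carrier (dihedral r)"
      by auto
    show "x \<otimes>\<^bsub>semidirect r \<psi>1 \<psi>2\<^esub> y \<otimes>\<^bsub>semidirect r \<psi>1 \<psi>2\<^esub> z =
        x \<otimes>\<^bsub>semidirect r \<psi>1 \<psi>2\<^esub> (y \<otimes>\<^bsub>semidirect r \<psi>1 \<psi>2\<^esub> z)"
      using ghk by (simp add: xyz dihedral_rep_mult_vec[OF rep1] dihedral_rep_mult_vec[OF rep2]
          matrix_vector_right_distrib D.m_assoc add.assoc)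
  next
    fix x
    assume "x \<in> carrier (semidirect r \<psi>1 \<psi>2)"
    then obtain v1 v2 g where x: "x = (v1, v2, g)" and g: "g \<in> carrier (dihedral r)"
      by auto
    then show "\<one>\<^bsub>semidirect r \<psi>1 \<psi>2\<^esub> \<otimes>\<^bsub>semidirect r \<psi>1 \<psi>2\<^esub> x = x"
      by (cases g) (simp add: dihedral_rep_one_vec[OF rep1] dihedral_rep_one_vec[OF rep2] carrier_dihedral)
    let ?h = "inv\<^bsub>dihedral r\<^esub> g"
    have "(- (\<psi>1 ?h *v v1), - (\<psi>2 ?h *v v2), ?h) \<otimes>\<^bsub>semidirect r \<psi>1 \<psi>2\<^esub> x = \<one>\<^bsub>semidirect r \<psi>1 \<psi>2\<^esub>"
      using g by (simp add: x)
    then show "\<exists>y\<in>carrier (semidirect r \<psi>1 \<psi>2). y \<otimes>\<^bsub>semidirect r \<psi>1 \<psi>2\<^esub> x = \<one>\<^bsub>semidirect r \<psi>1 \<psi>2\<^esub>"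
      using g by (intro bexI) auto
  qed (use \<open>0 < r\<close> in \<open>auto simp: carrier_dihedral\<close>)
qed

lemma semidirect_projection_hom:
  "(\<lambda>x. snd (snd x)) \<in> hom (semidirect r \<psi>1 \<psi>2) (dihedral r)"
  by (rule homI) auto

lemma generate_semidirect_projection:
  assumes "dihedral_rep r \<psi>1" "dihedral_rep r \<psi>2" "0 < r" "X \<subseteq> carrier (semidirect r \<psi>1 \<psi>2)"
    and "generate (semidirect r \<psi>1 \<psi>2) X = carrier (semidirect r \<psi>1 \<psi>2)"
  shows "generate (dihedral r) ((\<lambda>x. snd (snd x)) ` X) = carrier (dihedral r)"
proof -
  interpret group_hom "semidirect r \<psi>1 \<psi>2" "dihedral r" "\<lambda>x. snd (snd x)"
    by (intro group_hom.intro group_hom_axioms.intro group_semidirect group_dihedral assms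
        semidirect_projection_hom)
  have "(\<lambda>x. snd (snd x)) ` carrier (semidirect r \<psi>1 \<psi>2) = carrier (dihedral r)"
    by (force)
  then show ?thesis
    using assms by (simp add: generate_img)
qed

definition equivariant_pair_map :: "nat \<Rightarrow> (nat \<times> bool \<Rightarrow> 'k::field ^'n1 ^'n1) \<Rightarrow> (nat \<times> bool \<Rightarrow> 'k ^'n2 ^'n2)
    \<Rightarrow> (nat \<times> bool \<Rightarrow> 'k ^'m ^'m) \<Rightarrow> ('k^'n1 \<Rightarrow> 'k^'n2 \<Rightarrow> 'k^'m) \<Rightarrow> bool" where
  "equivariant_pair_map r \<psi>1 \<psi>2 \<psi> P \<longleftrightarrow>
     (\<forall>v1 v2 w1 w2. P (v1 + w1) (v2 + w2) = P v1 v2 + P w1 w2) \<and>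
     (\<forall>g\<in>carrier (dihedral r). \<forall>v1 v2. P (\<psi>1 g *v v1) (\<psi>2 g *v v2) = \<psi> g *v P v1 v2)"

lemma equivariant_pair_map_add:
  "equivariant_pair_map r \<psi>1 \<psi>2 \<psi> P \<Longrightarrow> P (v1 + w1) (v2 + w2) = P v1 v2 + P w1 w2"
  by (simp add: equivariant_pair_map_def)

lemma equivariant_pair_map_commute:
  "equivariant_pair_map r \<psi>1 \<psi>2 \<psi> P \<Longrightarrow> g \<in> carrier (dihedral r) \<Longrightarrow>
    P (\<psi>1 g *v v1) (\<psi>2 g *v v2) = \<psi> g *v P v1 v2"
  by (simp add: equivariant_pair_map_def)

lemma equivariant_pair_map_zero: "equivariant_pair_map r \<psi>1 \<psi>2 \<psi> P \<Longrightarrow> P 0 0 = 0"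
  using equivariant_pair_map_add[of r \<psi>1 \<psi>2 \<psi> P 0 0 0 0] by simp

lemma equivariant_pair_map_eq_neg:
  assumes "equivariant_pair_map r \<psi>1 \<psi>2 \<psi> P" "g \<in> carrier (dihedral r)"
    and "P (v1 + \<psi>1 g *v v1) (v2 + \<psi>2 g *v v2) = 0"
  shows "\<psi> g *v P v1 v2 = - P v1 v2"
  using assms by (simp add: equivariant_pair_map_add equivariant_pair_map_commute eq_neg_iff_add_eq_0 add.commute)

text \<open>\<open>(v\<^sub>1, v\<^sub>2, g) \<mapsto> P v\<^sub>1 v\<^sub>2 - (n - \<psi> g n)\<close> is a crossed homomorphism on the semidirect
  product, so its kernel is a subgroup; if it contains the generators, it is everything.\<close>
lemma equivariant_pair_map_vanishes_if_coboundary: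
  assumes rep1: "dihedral_rep r \<psi>1" and rep2: "dihedral_rep r \<psi>2" and rep: "dihedral_rep r \<psi>"
    and "0 < r" and P: "equivariant_pair_map r \<psi>1 \<psi>2 \<psi> P"
    and X: "X \<subseteq> carrier (semidirect r \<psi>1 \<psi>2)"
    and gen: "generate (semidirect r \<psi>1 \<psi>2) X = carrier (semidirect r \<psi>1 \<psi>2)"
    and coboundary: "\<And>v1 v2 g. (v1, v2, g) \<in> X \<Longrightarrow> P v1 v2 = n - \<psi> g *v n"
  shows "P v1 v2 = 0"
proof -
  interpret G: group "semidirect r \<psi>1 \<psi>2"
    using rep1 rep2 \<open>0 < r\<close> by (rule group_semidirect)
  interpret D: group "dihedral r"
    using \<open>0 < r\<close> by (rule group_dihedral)
  define K where "K = {(v1, v2, g). g \<in> carrier (dihedral r) \<and> P v1 v2 = n - \<psi> g *v n}"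
  have product: "P (v1 + \<psi>1 g *v w1) (v2 + \<psi>2 g *v w2) = n - \<psi> (g \<otimes>\<^bsub>dihedral r\<^esub> h) *v n"
    if "g \<in> carrier (dihedral r)" "h \<in> carrier (dihedral r)"
      "P v1 v2 = n - \<psi> g *v n" "P w1 w2 = n - \<psi> h *v n" for v1 v2 w1 w2 g h
    using that by (simp add: equivariant_pair_map_add[OF P] equivariant_pair_map_commute[OF P]
        matrix_vector_mult_diff_distrib dihedral_rep_mult_vec[OF rep])
  have "subgroup K (semidirect r \<psi>1 \<psi>2)"
  proof (rule G.subgroupI)
    show "K \<subseteq> carrier (semidirect r \<psi>1 \<psi>2)"
      by (auto simp: K_def)
    have "(0, 0, \<one>\<^bsub>dihedral r\<^esub>) \<in> K"
      using D.one_closed equivariant_pair_map_zero[OF P] dihedral_rep_one_vec[OF rep]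
      unfolding K_def by simp
    then show "K \<noteq> {}"
      by blast
    show "x \<otimes>\<^bsub>semidirect r \<psi>1 \<psi>2\<^esub> y \<in> K" if "x \<in> K" "y \<in> K" for x y
    proof -
      obtain v1 v2 g w1 w2 h where "x = (v1, v2, g)" "y = (w1, w2, h)"
        by (cases x, cases y)
      with that show ?thesis
        using product D.m_closed unfolding K_def by simp
    qed
  next
    fix x
    assume "x \<in> K"
    then obtain v1 v2 g where x: "x = (v1, v2, g)" "g \<in> carrier (dihedral r)" "P v1 v2 = n - \<psi> g *v n"
      unfolding K_def by blast
    let ?inv = "inv\<^bsub>semidirect r \<psi>1 \<psi>2\<^esub> (v1, v2, g)"
    obtain w1 w2 h where y: "?inv = (w1, w2, h)"
      by (cases ?inv)
    have "?inv \<otimes>\<^bsub>semidirect r \<psi>1 \<psi>2\<^esub> (v1, v2, g) = \<one>\<^bsub>semidirect r \<psi>1 \<psi>2\<^esub>"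
      using x(2) by (intro G.l_inv) simp
    then have inverse: "w1 + \<psi>1 h *v v1 = 0" "w2 + \<psi>2 h *v v2 = 0" "h \<otimes>\<^bsub>dihedral r\<^esub> g = \<one>\<^bsub>dihedral r\<^esub>"
      by (simp_all add: y)
    have h: "h \<in> carrier (dihedral r)"
      using G.inv_closed[of "(v1, v2, g)"] x(2) by (simp add: y)
    have "P w1 w2 + \<psi> h *v P v1 v2 = P (w1 + \<psi>1 h *v v1) (w2 + \<psi>2 h *v v2)"
      by (simp add: equivariant_pair_map_add[OF P] equivariant_pair_map_commute[OF P h])
    then have "P w1 w2 + \<psi> h *v (n - \<psi> g *v n) = 0"
      using inverse x(3) equivariant_pair_map_zero[OF P] by simp
    then have "P w1 w2 = n - \<psi> h *v n"
      using inverse(3) h x(2) dihedral_rep_one_vec[OF rep]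
      by (simp add: matrix_vector_mult_diff_distrib dihedral_rep_mult_vec[OF rep] eq_neg_iff_add_eq_0[symmetric])
    then show "inv\<^bsub>semidirect r \<psi>1 \<psi>2\<^esub> x \<in> K"
      using h by (simp add: x(1) y K_def)
  qed
  moreover have "X \<subseteq> K"
  proof
    fix x
    assume "x \<in> X"
    moreover obtain v1 v2 g where "x = (v1, v2, g)"
      by (cases x)
    ultimately show "x \<in> K"
      using X coboundary unfolding K_def by auto
  qed
  ultimately have "carrier (semidirect r \<psi>1 \<psi>2) \<subseteq> K"
    using G.generate_subgroup_incl gen by blast
  then have "(v1, v2, \<one>\<^bsub>dihedral r\<^esub>) \<in> K"
    using \<open>0 < r\<close> by (auto simp: carrier_dihedral)
  then show ?thesis
    using dihedral_rep_one_vec[OF rep] by (simp add: K_def)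
qed

lemma rep_isoE:
  fixes \<psi>1 :: "nat \<times> bool \<Rightarrow> 'k::field ^'n1 ^'n1" and \<psi>2 :: "nat \<times> bool \<Rightarrow> 'k ^'n2 ^'n2"
  assumes "rep_iso r \<psi>1 \<psi>2"
  obtains S :: "'k^'n2^'n1" and T :: "'k^'n1^'n2"
  where "\<And>v. S *v (T *v v) = v" "\<And>w. T *v (S *v w) = w"
    and "\<And>g w. g \<in> carrier (dihedral r) \<Longrightarrow> S *v (\<psi>2 g *v w) = \<psi>1 g *v (S *v w)"
proof -
  obtain T S where TS: "T ** S = mat 1" and ST: "S ** T = mat 1"
    and T: "\<forall>g\<in>carrier (dihedral r). T ** \<psi>1 g = \<psi>2 g ** T"
    using assms unfolding rep_iso_def by blast
  have "S ** \<psi>2 g = \<psi>1 g ** S" if "g \<in> carrier (dihedral r)" for g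
  proof -
    have "S ** \<psi>2 g = S ** \<psi>2 g ** (T ** S)"
      by (simp add: TS)
    also have "\<dots> = S ** (T ** \<psi>1 g) ** S"
      using T that by (simp add: matrix_mul_assoc)
    also have "\<dots> = \<psi>1 g ** S"
      by (metis ST matrix_mul_assoc matrix_mul_lid)
    finally show ?thesis .
  qed
  then show ?thesis
    using TS ST by (intro that[of S T]) (simp_all add: matrix_vector_mul_assoc)
qed

lemma rep_iso_fixed_vector:
  fixes \<psi>1 :: "nat \<times> bool \<Rightarrow> 'k::field ^'n1 ^'n1" and \<psi>2 :: "nat \<times> bool \<Rightarrow> 'k ^'n2 ^'n2"
  assumes "rep_iso r \<psi>1 \<psi>2" and "g \<in> carrier (dihedral r)"
    and "\<psi>1 g *v a1 = a1" "\<psi>2 g *v b2 = b2" "a1 \<noteq> 0 \<or> b2 \<noteq> 0"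
  obtains a where "a \<noteq> 0" "\<psi>1 g *v a = a"
proof (cases "a1 = 0")
  case True
  obtain S T where "\<And>v. S *v (T *v v) = v" and ST: "\<And>w. T *v (S *v w) = w"
    and S: "\<And>g w. g \<in> carrier (dihedral r) \<Longrightarrow> S *v (\<psi>2 g *v w) = \<psi>1 g *v (S *v w)"
    using rep_isoE[OF assms(1)] by metis
  show ?thesis
  proof (rule that)
    show "S *v b2 \<noteq> 0"
      using True assms(5) ST[of b2] by auto
    show "\<psi>1 g *v (S *v b2) = S *v b2"
      using S[OF assms(2), of b2] assms(4) by simp
  qed
next
  case False
  then show ?thesis
    using assms(3) by (rule that)
qed


text \<open>For \<open>a\<^sub>1 = 0\<close> take the projection to \<open>V\<^sub>1\<close>; otherwise \<open>a\<^sub>1\<close> and the image of \<open>b\<^sub>2\<close> in \<open>V\<^sub>1\<close>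
  are fixed by the same reflection, hence \<open>R a\<^sub>1 = S b\<^sub>2\<close> for an endomorphism \<open>R\<close>, and
  \<open>P v\<^sub>1 v\<^sub>2 = R v\<^sub>1 - S v\<^sub>2\<close> works.\<close>
lemma rep_iso_equivariant_pair_map:
  fixes \<psi>1 :: "nat \<times> bool \<Rightarrow> 'k::field ^'n1 ^'n1" and \<psi>2 :: "nat \<times> bool \<Rightarrow> 'k ^'n2 ^'n2"
  assumes irr1: "irreducible_rep r \<psi>1" and iso: "rep_iso r \<psi>1 \<psi>2"
    and "2 \<le> r" "c < r" and two: "(2::'k) \<noteq> 0"
    and a1: "\<psi>1 (c, True) *v a1 = a1" and b2: "\<psi>2 (c, True) *v b2 = b2"
  obtains P where "equivariant_pair_map r \<psi>1 \<psi>2 \<psi>1 P" "P a1 b2 = 0" "\<exists>y1 y2. P y1 y2 \<noteq> 0"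
proof -
  obtain S T where TS: "\<And>v. S *v (T *v v) = v" and "\<And>w. T *v (S *v w) = w"
    and S: "\<And>g w. g \<in> carrier (dihedral r) \<Longrightarrow> S *v (\<psi>2 g *v w) = \<psi>1 g *v (S *v w)"
    using rep_isoE[OF iso] by metis
  obtain v0 :: "'k^'n1" where "v0 \<noteq> 0"
    using irr1 unfolding irreducible_rep_def by blast
  show ?thesis
  proof (cases "a1 = 0")
    case True
    show ?thesis
    proof (rule that)
      show "equivariant_pair_map r \<psi>1 \<psi>2 \<psi>1 (\<lambda>v1 v2. v1)"
        by (simp add: equivariant_pair_map_def)
      show "\<exists>y1 y2. (\<lambda>v1 v2. v1) y1 y2 \<noteq> (0::'k^'n1)"
        using \<open>v0 \<noteq> 0\<close> by blast
    qed (use True in simp)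
  next
    case False
    have "\<psi>1 (c, True) *v (S *v b2) = 1 *s (S *v b2)"
      using S[of "(c, True)" b2] b2 \<open>c < r\<close> by (simp add: carrier_dihedral)
    moreover have "\<psi>1 (c, True) *v a1 = 1 *s a1"
      using a1 by simp
    ultimately obtain R where R: "intertwiner r \<psi>1 R" "R a1 = S *v b2"
      using reflection_eigenvectors_intertwined[OF irr1 \<open>2 \<le> r\<close> \<open>c < r\<close> two _ False] by metis
    show ?thesis
    proof (rule that)
      show "equivariant_pair_map r \<psi>1 \<psi>2 \<psi>1 (\<lambda>v1 v2. R v1 - S *v v2)"
        using R(1) S by (simp add: equivariant_pair_map_def intertwiner_add intertwiner_commute
            matrix_vector_right_distrib matrix_vector_mult_diff_distrib)
      show "R a1 - S *v b2 = 0"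
        using R(2) by simp
      have "R 0 - S *v (T *v v0) \<noteq> 0"
        using \<open>v0 \<noteq> 0\<close> TS intertwiner_diff[OF R(1), of 0 0] by simp
      then show "\<exists>y1 y2. R y1 - S *v y2 \<noteq> 0"
        by blast
    qed
  qed
qed

lemma two_neq_zero_if_odd_card:
  assumes "odd CARD('k::field)"
  shows "(2::'k) \<noteq> 0"
proof
  assume "(2::'k) = 0"
  then have "CHAR('k) dvd 2"
    by (metis of_nat_eq_0_iff_char_dvd of_nat_numeral)
  moreover have "CHAR('k) dvd CARD('k)"
    by (rule CHAR_dvd_CARD)
  moreover have "coprime 2 CARD('k)"
    using assms by simp
  ultimately have "CHAR('k) = 1"
    using coprime_common_divisor_nat by blast
  then show False
    by simp
qed


lemma group_square_eq_one_iff: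
  "group G \<Longrightarrow> x \<in> carrier G \<Longrightarrow> x \<otimes>\<^bsub>G\<^esub> x = \<one>\<^bsub>G\<^esub> \<longleftrightarrow> group.ord G x dvd 2"
  using group.pow_eq_id[of G x 2] by (simp add: numeral_2_eq_2 group.is_monoid)

lemma rotary_pair_semidirectE:
  assumes rep1: "dihedral_rep r \<psi>1" and rep2: "dihedral_rep r \<psi>2" and "3 \<le> r"
    and "coprime r k" and "2 \<le> k"
    and rotary: "rotary_pair (semidirect r \<psi>1 \<psi>2) \<rho> \<tau>"
    and ord_\<rho>: "group.ord (semidirect r \<psi>1 \<psi>2) \<rho> = 2 * k"
  obtains c u1 u2 t w1 w2 where "\<rho> = (u1, u2, (c, True))" "\<tau> = (w1, w2, t)" "c < r"
    "t \<in> carrier (dihedral r)" "t \<otimes>\<^bsub>dihedral r\<^esub> t = \<one>\<^bsub>dihedral r\<^esub>"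
    "generate (dihedral r) {(c, True), t} = carrier (dihedral r)"
    "u1 + \<psi>1 (c, True) *v u1 \<noteq> 0 \<or> u2 + \<psi>2 (c, True) *v u2 \<noteq> 0"
    "w1 + \<psi>1 t *v w1 = 0" "w2 + \<psi>2 t *v w2 = 0"
proof -
  let ?G = "semidirect r \<psi>1 \<psi>2"
  have "0 < r"
    using \<open>3 \<le> r\<close> by simp
  have G: "group ?G" and D: "group (dihedral r)"
    using rep1 rep2 \<open>0 < r\<close> by (simp_all add: group_semidirect group_dihedral)
  obtain u1 u2 s w1 w2 t where \<rho>: "\<rho> = (u1, u2, s)" and \<tau>: "\<tau> = (w1, w2, t)"
    by (cases \<rho>, cases \<tau>)
  have carrier: "\<rho> \<in> carrier ?G" "\<tau> \<in> carrier ?G" and gen: "generate ?G {\<rho>, \<tau>} = carrier ?G"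
    and ord_\<tau>: "group.ord ?G \<tau> = 2"
    using rotary unfolding rotary_pair_def by auto
  then have st: "s \<in> carrier (dihedral r)" "t \<in> carrier (dihedral r)"
    by (simp_all add: \<rho> \<tau>)
  have gen_st: "generate (dihedral r) {s, t} = carrier (dihedral r)"
    using generate_semidirect_projection[OF rep1 rep2 \<open>0 < r\<close> _ gen] carrier by (simp add: \<rho> \<tau>)
  have "\<tau> \<otimes>\<^bsub>?G\<^esub> \<tau> = \<one>\<^bsub>?G\<^esub>"
    using group_square_eq_one_iff[OF G carrier(2)] ord_\<tau> by simp
  then have tt: "t \<otimes>\<^bsub>dihedral r\<^esub> t = \<one>\<^bsub>dihedral r\<^esub>" and "w1 + \<psi>1 t *v w1 = 0" "w2 + \<psi>2 t *v w2 = 0"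
    by (simp_all add: \<tau>)
  have "\<rho> [^]\<^bsub>?G\<^esub> (2 * k) = \<one>\<^bsub>?G\<^esub>"
    using group.pow_eq_id[OF G carrier(1)] ord_\<rho> by simp
  then have "s [^]\<^bsub>dihedral r\<^esub> (2 * k) = \<one>\<^bsub>dihedral r\<^esub>"
    using hom_nat_pow[OF semidirect_projection_hom carrier(1) G D, of "2 * k"]
    by (simp add: \<rho>)
  then have "snd s"
    using dihedral_generator_is_reflection[OF \<open>3 \<le> r\<close> \<open>coprime r k\<close> st(1) _ st(2) tt gen_st] by blast
  then obtain c where s: "s = (c, True)" "c < r"
    using st(1) by (cases s) (auto simp: carrier_dihedral)
  have "\<rho> \<otimes>\<^bsub>?G\<^esub> \<rho> \<noteq> \<one>\<^bsub>?G\<^esub>"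
    using group_square_eq_one_iff[OF G carrier(1)] ord_\<rho> \<open>2 \<le> k\<close> by (auto dest: dvd_imp_le)
  then have "u1 + \<psi>1 (c, True) *v u1 \<noteq> 0 \<or> u2 + \<psi>2 (c, True) *v u2 \<noteq> 0"
    using \<open>c < r\<close> by (simp add: \<rho> s)
  then show ?thesis
    using that[OF \<rho>[unfolded s(1)] \<tau> s(2) st(2) tt gen_st[unfolded s(1)]] \<open>w1 + \<psi>1 t *v w1 = 0\<close>
      \<open>w2 + \<psi>2 t *v w2 = 0\<close> by blast
qed

theorem lemma6p4:
  fixes p r :: nat
    and \<psi>1 :: "nat \<times> bool \<Rightarrow> 'k::{field,finite} ^'n1 ^'n1"
    and \<psi>2 :: "nat \<times> bool \<Rightarrow> 'k ^'n2 ^'n2"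
    and \<rho> \<tau> :: "('k^'n1) \<times> ('k^'n2) \<times> (nat \<times> bool)"
  assumes "prime p" and "odd p" and "CARD('k) = p"
    and "r \<ge> 3" and "\<not> p dvd r"
    and "irreducible_rep r \<psi>1" and "irreducible_rep r \<psi>2"
    and "rotary_pair (semidirect r \<psi>1 \<psi>2) \<rho> \<tau>"
    and "group.ord (semidirect r \<psi>1 \<psi>2) \<rho> = 2 * p"
    and "group.ord (semidirect r \<psi>1 \<psi>2) \<tau> = 2"
  shows "\<not> rep_iso r \<psi>1 \<psi>2"
proof
  assume iso: "rep_iso r \<psi>1 \<psi>2"
  have rep1: "dihedral_rep r \<psi>1" and rep2: "dihedral_rep r \<psi>2"
    using assms(6,7) by (simp_all add: irreducible_rep_def)
  have "0 < r" "2 \<le> r"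
    using assms(4) by simp_all
  have two: "(2::'k) \<noteq> 0"
    using assms(2,3) by (intro two_neq_zero_if_odd_card) simp
  have "coprime r p"
    using assms(1,5) by (simp add: prime_imp_coprime_nat coprime_commute)
  obtain c u1 u2 t w1 w2 where \<rho>: "\<rho> = (u1, u2, (c, True))" and \<tau>: "\<tau> = (w1, w2, t)" and "c < r"
    and t: "t \<in> carrier (dihedral r)" "t \<otimes>\<^bsub>dihedral r\<^esub> t = \<one>\<^bsub>dihedral r\<^esub>"
    and gen: "generate (dihedral r) {(c, True), t} = carrier (dihedral r)"
    and \<rho>_square: "u1 + \<psi>1 (c, True) *v u1 \<noteq> 0 \<or> u2 + \<psi>2 (c, True) *v u2 \<noteq> 0"
    and \<tau>_square: "w1 + \<psi>1 t *v w1 = 0" "w2 + \<psi>2 t *v w2 = 0"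
    using rotary_pair_semidirectE[OF rep1 rep2 assms(4) \<open>coprime r p\<close> prime_ge_2_nat[OF assms(1)] assms(8,9)]
    by metis
  define a1 b2 where "a1 = u1 + \<psi>1 (c, True) *v u1" and "b2 = u2 + \<psi>2 (c, True) *v u2"
  have s: "(c, True) \<in> carrier (dihedral r)" "(c, True) \<otimes>\<^bsub>dihedral r\<^esub> (c, True) = \<one>\<^bsub>dihedral r\<^esub>"
    using \<open>c < r\<close> by (auto simp: carrier_dihedral)
  have fixed: "\<psi>1 (c, True) *v a1 = a1" "\<psi>2 (c, True) *v b2 = b2"
    using dihedral_rep_involution_vec[OF rep1 s] dihedral_rep_involution_vec[OF rep2 s]
    by (simp_all add: a1_def b2_def matrix_vector_right_distrib add.commute)
  obtain P where P: "equivariant_pair_map r \<psi>1 \<psi>2 \<psi>1 P" "P a1 b2 = 0" "\<exists>y1 y2. P y1 y2 \<noteq> 0"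
    using rep_iso_equivariant_pair_map[OF assms(6) iso \<open>2 \<le> r\<close> \<open>c < r\<close> two fixed] by metis
  obtain a where a: "\<psi>1 (c, True) *v a = a" "a \<noteq> 0"
    using rep_iso_fixed_vector[OF iso s(1) fixed] \<rho>_square unfolding a1_def b2_def by metis
  have "\<psi>1 (c, True) *v P u1 u2 = - P u1 u2"
    using equivariant_pair_map_eq_neg[OF P(1) s(1)] P(2) by (simp add: a1_def b2_def)
  moreover have "\<psi>1 t *v P w1 w2 = - P w1 w2"
    using equivariant_pair_map_eq_neg[OF P(1) t(1)] \<tau>_square equivariant_pair_map_zero[OF P(1)] by simp
  ultimately obtain n where "P u1 u2 = n - \<psi>1 (c, True) *v n" "P w1 w2 = n - \<psi>1 t *v n"
    using reflection_involution_coboundary[OF assms(6) \<open>2 \<le> r\<close> \<open>c < r\<close> two t gen a] by metis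
  then have "P y1 y2 = 0" for y1 y2
    using assms(8) unfolding rotary_pair_def
    by (intro equivariant_pair_map_vanishes_if_coboundary[OF rep1 rep2 rep1 \<open>0 < r\<close> P(1), of "{\<rho>, \<tau>}"])
      (auto simp: \<rho> \<tau>)
  with P(3) show False
    by blast
qed

end
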